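(* Let $b$ be a prime and let $p$ be a prime of the form $p=bt+1$ with $t$ a positive integer and $b\nmid t$. Then $$g\Big(\tfrac{p^b-1}{b^2},\,p^b\Big)=b\,g(t,p).$$ In particular, if $b$ is an odd prime and $p=2b+1$ is prime, then $g\big(\tfrac{p^b-1}{b^2},p^b\big)=2b$.
   Context: For a prime power $q$ and a positive integer $k$, the Waring number $g(k,q)$ is the smallest $s$ (if it exists) such that every element of $\mathbb{F}_q$ is a sum of $s$ $k$-th powers of elements of $\mathbb{F}_q$. *)

theory Defs
  imports "HOL-Computational_Algebra.Primes"
begin

text \<open>Finite fields F_q are represented by finite field types 'a with CARD('a) = q.
  waring_rep k s: every element of the field is a sum of s k-th powers.\<close>

definition waring_rep :: "nat \<Rightarrow> nat \<Rightarrow> ('a::{field,finite}) itself \<Rightarrow> bool" where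
  "waring_rep k s T \<longleftrightarrow> (\<forall>x::'a. \<exists>f::nat \<Rightarrow> 'a. x = (\<Sum>i<s. f i ^ k))"

text \<open>The Waring number g(k,q): the least such s (meaningful when some s exists).\<close>
definition waring_number :: "nat \<Rightarrow> ('a::{field,finite}) itself \<Rightarrow> nat" where
  "waring_number k T = (LEAST s. waring_rep k s T)"

end

theory Submission
  imports Defs "HOL-Number_Theory.Residues" "HOL-Computational_Algebra.Polynomial"
begin

text \<open>
  Let \<open>q = p^b\<close>, \<open>k = (q - 1) / b^2\<close>, let \<open>g\<close> generate the cyclic group \<open>\<bbbF>\<^sub>q\<^sup>*\<close> and put
  \<open>\<zeta> = g^k\<close>, an element of order \<open>b^2\<close>. The nonzero \<open>k\<close>-th powers are the powers of \<open>\<zeta>\<close>.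
  Because \<open>p \<equiv> 1 + bt (mod b^2)\<close> with \<open>b \<nmid> t\<close>, the conjugates \<open>\<zeta>^(p^j)\<close>, \<open>j < b\<close>, are
  distinct, so \<open>1, \<zeta>, \<dots>, \<zeta>^(b-1)\<close> is a basis of \<open>\<bbbF>\<^sub>q\<close> over \<open>\<bbbF>\<^sub>p\<close>. The powers of
  \<open>\<omega> = \<zeta>^b\<close> are the \<open>b = (p - 1)/t\<close> nonzero \<open>t\<close>-th powers of \<open>\<bbbF>\<^sub>p\<close>, hence the \<open>k\<close>-th
  powers of \<open>\<bbbF>\<^sub>q\<close> are exactly the elements \<open>c^t \<zeta>^i\<close> with \<open>c \<in> \<bbbF>\<^sub>p\<close>, \<open>i < b\<close>.
  A sum of \<open>s\<close> such terms is thus the same as writing each coordinate as a sum of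
  \<open>t\<close>-th powers in \<open>\<bbbF>\<^sub>p\<close>, with \<open>s\<close> terms altogether. Representing \<open>a(1 + \<zeta> + \<dots> + \<zeta>^(b-1))\<close>
  forces some coordinate to use at most \<open>s/b\<close> terms, which gives \<open>g(k,q) = b g(t,p)\<close>.
  For \<open>t = 2\<close> the \<open>b + 1\<close> squares of \<open>\<bbbF>\<^sub>p\<close> are more than half of the field, so
  every element is a sum of two of them.
\<close>

section \<open>Finite fields and their prime fields\<close>

definition type_ring :: "'a::field ring" where
  "type_ring = \<lparr>carrier = UNIV, mult = (*), one = 1, zero = 0, add = (+)\<rparr>"

lemma field_type_ring: "field (type_ring :: 'a::field ring)"
proof -
  have "cring (type_ring :: 'a ring)"
    by (auto intro!: cringI abelian_groupI comm_monoidI simp: type_ring_def algebra_simps)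
      (metis add.right_inverse)
  then show ?thesis
    by (rule cring.cring_fieldI)
      (auto simp: type_ring_def Units_def, metis field_class.field_inverse mult.commute)
qed

lemma type_ring_pow: "x [^]\<^bsub>type_ring\<^esub> (n::nat) = (x::'a::field) ^ n"
  by (induct n) (auto simp: type_ring_def)

lemma finite_field_primitive_element:
  obtains g :: "'a::{field,finite}"
  where "\<And>x. x \<noteq> 0 \<Longrightarrow> \<exists>i. x = g ^ i"
    and "\<And>i. g ^ i = 1 \<longleftrightarrow> (card (UNIV :: 'a set) - 1) dvd i"
proof -
  let ?R = "type_ring :: 'a ring"
  interpret F: field ?R by (rule field_type_ring)
  interpret G: group "mult_of ?R" by (rule F.field_mult_group)
  have fin: "finite (carrier ?R)" by (simp add: type_ring_def)
  obtain a where a: "a \<in> carrier (mult_of ?R)"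
    and gen: "carrier (mult_of ?R) = {a [^]\<^bsub>?R\<^esub> i | i::nat. i \<in> UNIV}"
    using F.finite_field_mult_group_has_gen[OF fin] by blast
  have "generate (mult_of ?R) {a} = carrier (mult_of ?R)"
    using G.generate_pow_nat[OF a] gen G.ord_ge_1[OF _ a] F.finite_mult_of[OF fin]
    by (auto simp: nat_pow_mult_of)
  then have "G.ord a = card (UNIV :: 'a set) - 1"
    using G.generate_pow_card[OF a] F.order_mult_of[OF fin]
    by (simp add: Coset.order_def type_ring_def)
  then have "a ^ i = 1 \<longleftrightarrow> (card (UNIV :: 'a set) - 1) dvd i" for i
    using G.pow_eq_id[OF a, of i]
    by (simp add: nat_pow_mult_of type_ring_pow) (simp add: type_ring_def)
  moreover have "\<exists>i. x = a ^ i" if "x \<noteq> 0" for x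
    using gen that by (auto simp: type_ring_def type_ring_pow[symmetric])
  ultimately show ?thesis using that by blast
qed

lemma CHAR_eq_prime_of_card:
  assumes "prime p" "card (UNIV :: 'a::{field,finite} set) = p ^ e"
  shows "CHAR('a) = p"
proof -
  have "prime CHAR('a)"
    by (intro prime_CHAR_semidom finite_imp_CHAR_pos) simp
  moreover have "CHAR('a) dvd p ^ e"
    using CHAR_dvd_CARD assms(2) by metis
  ultimately show ?thesis
    using assms(1) by (metis prime_dvd_power primes_dvd_imp_eq)
qed

lemma Ints_eq_of_nat_lessThan_CHAR:
  assumes "CHAR('a::ring_1) > 0"
  shows "(\<int> :: 'a set) = of_nat ` {..<CHAR('a)}"
proof (intro equalityI subsetI)
  fix x :: 'a
  assume "x \<in> \<int>"
  then obtain u where "x = of_int u"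
    by (auto elim: Ints_cases)
  also have "(of_int u :: 'a) = of_int (u mod int CHAR('a))"
    by (simp add: of_int_eq_iff_cong_CHAR cong_def)
  also have "\<dots> = of_nat (nat (u mod int CHAR('a)))"
    using assms by simp
  finally have "x = of_nat (nat (u mod int CHAR('a)))" .
  moreover have "nat (u mod int CHAR('a)) < CHAR('a)"
    using assms by (simp add: nat_less_iff)
  ultimately show "x \<in> of_nat ` {..<CHAR('a)}"
    by blast
qed auto

lemma card_Ints_eq_CHAR:
  assumes "CHAR('a::ring_1) > 0"
  shows "card (\<int> :: 'a set) = CHAR('a)"
  using assms
  by (simp add: Ints_eq_of_nat_lessThan_CHAR card_image inj_on_def of_nat_eq_iff_cong_CHAR cong_def)

lemma Ints_power_CHAR_power:
  fixes x :: "'a::comm_ring_1"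
  assumes "prime CHAR('a)" "x \<in> \<int>"
  shows "x ^ (CHAR('a) ^ j) = x"
proof -
  have "(of_nat m :: 'a) ^ (CHAR('a) ^ j) = of_nat m" for m
    using prime_gt_0_nat[OF assms(1)]
    by (induction m) (simp_all add: freshmans_dream' assms(1) power_0_left)
  moreover obtain m where "x = of_nat m"
    using assms(2) unfolding Ints_eq_of_nat_lessThan_CHAR[OF prime_gt_0_nat[OF assms(1)]] by blast
  ultimately show ?thesis
    by simp
qed

lemma power_CHAR_eq_iff_Ints:
  fixes x :: "'a::idom"
  assumes "prime CHAR('a)"
  shows "x ^ CHAR('a) = x \<longleftrightarrow> x \<in> \<int>"
proof -
  have CHAR_pos: "CHAR('a) > 0"
    using assms prime_gt_0_nat by blast
  define P :: "'a poly" where "P = monom 1 CHAR('a) - monom 1 1"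
  have roots: "{x. poly P x = 0} = {x. x ^ CHAR('a) = x}"
    by (simp add: P_def poly_monom)
  have "coeff P CHAR('a) = 1"
    using prime_gt_1_nat[OF assms] by (simp add: P_def coeff_monom)
  then have "P \<noteq> 0"
    by auto
  moreover have "degree P \<le> CHAR('a)"
    unfolding P_def using CHAR_pos
    by (intro degree_diff_le) (auto intro: order.trans[OF degree_monom_le])
  ultimately have "card {x::'a. x ^ CHAR('a) = x} \<le> card (\<int> :: 'a set)"
    and "finite {x::'a. x ^ CHAR('a) = x}"
    using card_poly_roots_bound poly_roots_finite roots card_Ints_eq_CHAR[OF CHAR_pos] by fastforce+
  moreover have "(\<int> :: 'a set) \<subseteq> {x. x ^ CHAR('a) = x}"
    using Ints_power_CHAR_power[OF assms, of _ 1] by auto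
  moreover have "finite (\<int> :: 'a set)"
    unfolding Ints_eq_of_nat_lessThan_CHAR[OF CHAR_pos] by simp
  ultimately have "(\<int> :: 'a set) = {x. x ^ CHAR('a) = x}"
    by (intro card_seteq) auto
  then show ?thesis
    by auto
qed

lemma Ints_coeff_sum_power_CHAR_power:
  fixes z :: "'a::comm_ring_1"
  assumes "prime CHAR('a)" "\<forall>i\<in>A. a i \<in> \<int>"
  shows "(\<Sum>i\<in>A. a i * z ^ i) ^ (CHAR('a) ^ j)
    = (\<Sum>i\<in>A. a i * (z ^ (CHAR('a) ^ j)) ^ i)"
  using assms
  by (simp add: freshmans_dream_sum' power_mult_distrib Ints_power_CHAR_power
      flip: power_mult add: mult.commute)

lemma Ints_independent_powers:
  fixes z :: "'a::idom"
  assumes "prime CHAR('a)" and conj_inj: "inj_on (\<lambda>j. z ^ (CHAR('a) ^ j)) {..<n}"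
    and Ints: "\<forall>i<n. a i \<in> \<int>" and zero: "(\<Sum>i<n. a i * z ^ i) = 0"
  shows "\<forall>i<n. a i = 0"
proof (rule ccontr)
  assume "\<not> (\<forall>i<n. a i = 0)"
  then obtain i0 where i0: "i0 < n" "a i0 \<noteq> 0"
    by blast
  define P :: "'a poly" where "P = (\<Sum>i<n. monom (a i) i)"
  have "coeff P i0 = a i0"
    using i0 by (simp add: P_def coeff_sum coeff_monom)
  then have "P \<noteq> 0"
    using i0 by auto
  have "poly P (z ^ (CHAR('a) ^ j)) = 0" for j
    using Ints_coeff_sum_power_CHAR_power[OF assms(1), of "{..<n}" a z j] Ints zero
      prime_gt_0_nat[OF assms(1)]
    by (simp add: P_def poly_sum poly_monom power_0_left)
  then have "card ((\<lambda>j. z ^ (CHAR('a) ^ j)) ` {..<n}) \<le> card {x. poly P x = 0}"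
    using poly_roots_finite[OF \<open>P \<noteq> 0\<close>] by (intro card_mono) auto
  also have "\<dots> \<le> degree P"
    using card_poly_roots_bound[OF \<open>P \<noteq> 0\<close>] .
  also have "degree P \<le> n - 1"
    unfolding P_def by (intro degree_sum_le) (auto intro: order.trans[OF degree_monom_le])
  finally show False
    using conj_inj i0(1) by (simp add: card_image)
qed

lemma Ints_spanning_powers:
  fixes z :: "'a::{idom,finite}"
  assumes "prime CHAR('a)" "inj_on (\<lambda>j. z ^ (CHAR('a) ^ j)) {..<n}"
    and card_UNIV: "card (UNIV :: 'a set) = CHAR('a) ^ n"
  shows "\<exists>a. (\<forall>i<n. a i \<in> \<int>) \<and> x = (\<Sum>i<n. a i * z ^ i)"
proof -
  define D where "D = {..<n} \<rightarrow>\<^sub>E (\<int> :: 'a set)"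
  define \<Phi> where "\<Phi> a = (\<Sum>i<n. a i * z ^ i)" for a
  have "inj_on \<Phi> D"
  proof (rule inj_onI)
    fix a a' assume "a \<in> D" "a' \<in> D" "\<Phi> a = \<Phi> a'"
    then have "(\<Sum>i<n. (a i - a' i) * z ^ i) = 0" and "\<forall>i<n. a i - a' i \<in> \<int>"
      by (simp_all add: \<Phi>_def D_def left_diff_distrib sum_subtractf PiE_iff)
    then have "\<forall>i<n. a i - a' i = 0"
      by (rule Ints_independent_powers[OF assms(1,2), rotated])
    then show "a = a'"
      using \<open>a \<in> D\<close> \<open>a' \<in> D\<close> unfolding D_def by (intro PiE_ext) auto
  qed
  then have "card (\<Phi> ` D) = CHAR('a) ^ n"
    using card_Ints_eq_CHAR[OF prime_gt_0_nat[OF assms(1)]]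
    by (simp add: card_image D_def card_PiE)
  then have "\<Phi> ` D = UNIV"
    using card_UNIV by (intro card_subset_eq) simp_all
  then obtain a where "a \<in> D" "x = \<Phi> a"
    by (metis UNIV_I imageE)
  then show ?thesis
    by (auto simp: D_def \<Phi>_def)
qed

section \<open>Waring representability in a subset\<close>

text \<open>For \<open>S = \<int>\<close> this is Waring representability in the prime field of a field of
  positive characteristic.\<close>

definition waring_rep_on :: "nat \<Rightarrow> nat \<Rightarrow> 'a::comm_semiring_1 set \<Rightarrow> bool" where
  "waring_rep_on k s S \<longleftrightarrow> (\<forall>x\<in>S. \<exists>f. range f \<subseteq> S \<and> x = (\<Sum>i<s. f i ^ k))"

lemma waring_rep_iff_waring_rep_on_UNIV:
  "waring_rep k s TYPE('a::{field,finite}) \<longleftrightarrow> waring_rep_on k s (UNIV :: 'a set)"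
  by (simp add: waring_rep_def waring_rep_on_def)

lemma waring_rep_on_Ints_transfer:
  assumes "CHAR('a::comm_ring_1) = CHAR('c::comm_ring_1)" "waring_rep_on k s (\<int> :: 'a set)"
  shows "waring_rep_on k s (\<int> :: 'c set)"
  unfolding waring_rep_on_def
proof
  fix x :: 'c
  assume "x \<in> \<int>"
  then obtain u where u: "x = of_int u"
    by (auto elim: Ints_cases)
  have "(of_int u :: 'a) \<in> \<int>"
    by simp
  then obtain f :: "nat \<Rightarrow> 'a" where f: "range f \<subseteq> \<int>" "of_int u = (\<Sum>i<s. f i ^ k)"
    using assms(2) unfolding waring_rep_on_def by blast
  have "\<forall>i. \<exists>r. f i = of_int r"
    using f(1) by (auto elim: Ints_cases)
  then obtain r where r: "\<And>i. f i = of_int (r i)"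
    by metis
  have "(of_int u :: 'a) = of_int (\<Sum>i<s. r i ^ k)"
    using f(2) by (simp add: r)
  then have "(of_int u :: 'c) = of_int (\<Sum>i<s. r i ^ k)"
    using assms(1) by (simp only: of_int_eq_iff_cong_CHAR)
  then show "\<exists>f. range f \<subseteq> \<int> \<and> x = (\<Sum>i<s. f i ^ k)"
    using u by (intro exI[of _ "\<lambda>i. of_int (r i)"]) auto
qed

lemma waring_rep_prime_field_iff_Ints:
  assumes "prime p" "card (UNIV :: 'c::{field,finite} set) = p" "CHAR('a::comm_ring_1) = p"
  shows "waring_rep k s TYPE('c) \<longleftrightarrow> waring_rep_on k s (\<int> :: 'a set)"
proof -
  have CHAR_c: "CHAR('c) = p"
    using CHAR_eq_prime_of_card[of p 1] assms(1,2) by simp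
  then have "card (\<int> :: 'c set) = card (UNIV :: 'c set)"
    using card_Ints_eq_CHAR[where 'a='c] assms(1,2) prime_gt_0_nat by simp
  then have "(\<int> :: 'c set) = UNIV"
    by (intro card_subset_eq) simp_all
  then show ?thesis
    using waring_rep_on_Ints_transfer[where 'a='a and 'c='c, of k s]
      waring_rep_on_Ints_transfer[where 'a='c and 'c='a, of k s] CHAR_c assms(3)
    by (auto simp: waring_rep_iff_waring_rep_on_UNIV)
qed

lemma waring_rep_on_Ints_CHAR:
  assumes "CHAR('a::comm_ring_1) > 0" "k > 0"
  shows "waring_rep_on k CHAR('a) (\<int> :: 'a set)"
  unfolding waring_rep_on_def
proof
  fix x :: 'a
  assume "x \<in> \<int>"
  then obtain m where m: "m < CHAR('a)" "x = of_nat m"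
    unfolding Ints_eq_of_nat_lessThan_CHAR[OF assms(1)] by blast
  define f where "f l = (if l < m then (1::'a) else 0)" for l
  have "(\<Sum>l<CHAR('a). f l ^ k) = (\<Sum>l<m. f l ^ k)"
    using m(1) assms(2) by (intro sum.mono_neutral_right) (auto simp: f_def power_0_left)
  also have "\<dots> = x"
    using m(2) by (simp add: f_def)
  finally show "\<exists>f. range f \<subseteq> \<int> \<and> x = (\<Sum>l<CHAR('a). f l ^ k)"
    by (intro exI[of _ f]) (auto simp: f_def)
qed

section \<open>Counting and congruences\<close>

lemma sum_powers_reindex_lessThan:
  fixes C :: "'b \<Rightarrow> 'a::comm_semiring_1"
  assumes "finite J" "card J \<le> n" "0 \<in> S" "C ` J \<subseteq> S" "k > 0"
  obtains f where "range f \<subseteq> S" "(\<Sum>j\<in>J. C j ^ k) = (\<Sum>l<n. f l ^ k)"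
proof -
  obtain h where h: "bij_betw h {..<card J} J"
    using ex_bij_betw_nat_finite[OF assms(1)] atLeast0LessThan by metis
  define f where "f l = (if l < card J then C (h l) else 0)" for l
  have "range f \<subseteq> S"
    using assms(3,4) bij_betwE[OF h] by (auto simp: f_def)
  moreover have "(\<Sum>j\<in>J. C j ^ k) = (\<Sum>l<n. f l ^ k)"
  proof -
    have "(\<Sum>j\<in>J. C j ^ k) = (\<Sum>l<card J. C (h l) ^ k)"
      by (rule sum.reindex_bij_betw[OF h, symmetric])
    also have "\<dots> = (\<Sum>l<card J. f l ^ k)"
      by (simp add: f_def)
    also have "\<dots> = (\<Sum>l<n. f l ^ k)"
      using assms(2,5) by (intro sum.mono_neutral_left) (auto simp: f_def power_0_left)
    finally show ?thesis .
  qed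
  ultimately show ?thesis
    using that by blast
qed

lemma ex_card_fiber_le_div:
  fixes I :: "nat \<Rightarrow> nat"
  assumes "b > 0" "\<forall>j<s. I j < b"
  shows "\<exists>i<b. card {j\<in>{..<s}. I j = i} \<le> s div b"
proof (rule ccontr)
  assume "\<not> ?thesis"
  then have "b * Suc (s div b) \<le> (\<Sum>i<b. card {j\<in>{..<s}. I j = i})"
    using sum_bounded_below[of "{..<b}" "Suc (s div b)"] by (simp add: not_le Suc_le_eq)
  also have "\<dots> = s"
    using sum.group[of "{..<s}" "{..<b}" I "\<lambda>_. 1::nat"] assms(2) by auto
  finally have "b * Suc (s div b) \<le> s" .
  moreover have "s < b * Suc (s div b)"
    using mult_div_mod_eq[of b s] mod_less_divisor[OF assms(1), of s]
    unfolding mult_Suc_right by linarith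
  ultimately show False
    by simp
qed

lemma Least_eq_mult_Least:
  fixes P Q :: "nat \<Rightarrow> bool"
  assumes "P n" and mult: "\<And>s. P s \<Longrightarrow> Q (b * s)" and div: "\<And>s. Q s \<Longrightarrow> P (s div b)"
  shows "(LEAST s. Q s) = b * (LEAST s. P s)"
proof (rule Least_equality)
  show "Q (b * (LEAST s. P s))"
    using mult LeastI[of P, OF assms(1)] .
next
  fix s
  assume "Q s"
  then have "(LEAST s. P s) \<le> s div b"
    using div Least_le by blast
  then have "b * (LEAST s. P s) \<le> b * (s div b)"
    by simp
  also have "\<dots> \<le> s"
    by simp
  finally show "b * (LEAST s. P s) \<le> s" .
qed

lemma ex_sum_eq_if_card_lt:
  fixes A S :: "'a::ab_group_add set"
  assumes "finite S" "A \<subseteq> S" "(\<lambda>x. a - x) ` A \<subseteq> S" "card S < 2 * card A"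
  shows "\<exists>x\<in>A. \<exists>y\<in>A. a = x + y"
proof -
  have "A \<inter> (\<lambda>x. a - x) ` A \<noteq> {}"
  proof
    assume "A \<inter> (\<lambda>x. a - x) ` A = {}"
    moreover have "finite A"
      using assms(1,2) finite_subset by blast
    moreover have "card ((\<lambda>x. a - x) ` A) = card A"
      by (intro card_image inj_onI) simp
    ultimately have "card (A \<union> (\<lambda>x. a - x) ` A) = 2 * card A"
      by (simp add: card_Un_disjoint)
    moreover have "card (A \<union> (\<lambda>x. a - x) ` A) \<le> card S"
      using assms(1-3) by (intro card_mono) auto
    ultimately show False
      using assms(4) by simp
  qed
  then obtain x y where "x \<in> A" "y \<in> A" "x = a - y"
    by blast
  then show ?thesis
    by (metis diff_add_cancel add.commute)
qed

lemma power_eq_power_iff_cong: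
  fixes g :: "'a::field"
  assumes "n > 0" "\<And>i. g ^ i = 1 \<longleftrightarrow> n dvd i"
  shows "g ^ u = g ^ v \<longleftrightarrow> [u = v] (mod n)"
proof (induction u v rule: linorder_wlog)
  case (le u v)
  have "g ^ n = 1"
    using assms(2) by simp
  then have "g \<noteq> 0"
    using assms(1) by (cases "g = 0") (simp_all add: power_0_left)
  then have "g ^ u = g ^ v \<longleftrightarrow> g ^ (v - u) = 1"
    using le by (auto simp: power_diff)
  also have "\<dots> \<longleftrightarrow> [u = v] (mod n)"
    using le assms(2) by (simp add: cong_altdef_nat cong_sym_eq[of u])
  finally show ?case .
qed (simp add: eq_commute cong_sym_eq)

lemma cong_power_eq_1_mod_square_iff:
  fixes b t d :: nat
  assumes "b > 0"
  shows "[(b * t + 1) ^ d = 1] (mod b^2) \<longleftrightarrow> b dvd d * t"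
proof -
  have "\<exists>m. (b * t + 1) ^ d = 1 + d * b * t + b^2 * m"
  proof (induction d)
    case (Suc d)
    then obtain m where "(b * t + 1) ^ d = 1 + d * b * t + b^2 * m"
      by blast
    then have "(b * t + 1) ^ Suc d = 1 + Suc d * b * t + b^2 * (m + d * t * t + b * t * m)"
      by (simp add: algebra_simps power2_eq_square)
    then show ?case
      by blast
  qed simp
  then obtain m where "(b * t + 1) ^ d = 1 + d * b * t + b^2 * m"
    by blast
  then have "[(b * t + 1) ^ d = 1] (mod b^2) \<longleftrightarrow> b^2 dvd d * b * t + m * b^2"
    by (simp add: cong_altdef_nat mult.commute)
  also have "\<dots> \<longleftrightarrow> b^2 dvd d * b * t"
    by (rule dvd_add_times_triv_right_iff)
  also have "\<dots> \<longleftrightarrow> b dvd d * t"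
    using assms by (simp add: power2_eq_square mult_ac)
  finally show ?thesis .
qed

section \<open>The field of order \<open>p^b\<close>\<close>

locale waring_extension =
  fixes b p t :: nat and g :: "'a::{field,finite}"
  assumes prime_b: "prime b" and prime_p: "prime p" and t_pos: "t > 0"
    and p_eq: "p = b * t + 1" and not_dvd: "\<not> b dvd t"
    and card_UNIV: "card (UNIV :: 'a set) = p ^ b"
    and generator: "\<And>x. x \<noteq> 0 \<Longrightarrow> \<exists>i. x = g ^ i"
    and order_generator: "\<And>i. g ^ i = 1 \<longleftrightarrow> (p ^ b - 1) dvd i"
begin

text \<open>Since \<open>e = (p^b - 1)/(p - 1)\<close>, \<open>gamma\<close> generates the multiplicative group of the prime
  field \<open>\<int>\<close>.\<close>

definition k :: nat where "k = (p ^ b - 1) div b^2"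

definition e :: nat where "e = (\<Sum>i<b. p ^ i)"

definition zeta :: 'a where "zeta = g ^ k"

definition omega :: 'a where "omega = zeta ^ b"

definition gamma :: 'a where "gamma = g ^ e"

lemma b_pos: "b > 0"
  using prime_b prime_gt_0_nat by blast

lemma CHAR_eq: "CHAR('a) = p"
  using CHAR_eq_prime_of_card[OF prime_p card_UNIV] .

lemma p_pow_b_minus_1: "p ^ b - 1 = b^2 * k"
proof -
  have "[p ^ b = 1] (mod b^2)"
    using cong_power_eq_1_mod_square_iff[OF b_pos, of t b] p_eq by (simp add: mult.commute)
  then have "b^2 dvd p ^ b - 1"
    using prime_gt_0_nat[OF prime_p] by (simp add: cong_altdef_nat)
  then show ?thesis
    by (simp add: k_def)
qed

lemma k_pos: "k > 0"
proof -
  have "p ^ b > 1"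
    using prime_gt_1_nat[OF prime_p] b_pos by (intro one_less_power) simp_all
  then show ?thesis
    using p_pow_b_minus_1 by (cases k) simp_all
qed

lemma p_minus_1_mult_e: "(p - 1) * e = b^2 * k"
proof -
  have "int (p ^ b) - 1 = (int p - 1) * (\<Sum>i<b. int p ^ i)"
    by (simp add: power_diff_1_eq)
  then have "int (p ^ b - 1) = int ((p - 1) * e)"
    using prime_gt_0_nat[OF prime_p] by (simp add: e_def of_nat_diff)
  then have "p ^ b - 1 = (p - 1) * e"
    by (simp only: of_nat_eq_iff)
  then show ?thesis
    using p_pow_b_minus_1 by simp
qed

lemma t_mult_e: "t * e = b * k"
  using p_minus_1_mult_e b_pos by (simp add: p_eq power2_eq_square mult_ac)

lemma order_g: "g ^ i = 1 \<longleftrightarrow> b^2 * k dvd i"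
  using order_generator p_pow_b_minus_1 by simp

lemma order_zeta: "zeta ^ i = 1 \<longleftrightarrow> b^2 dvd i"
proof -
  have "b^2 * k dvd k * i \<longleftrightarrow> b^2 dvd i"
    using k_pos by (simp add: mult.commute[of _ k])
  then show ?thesis
    by (simp add: zeta_def order_g flip: power_mult)
qed

lemma order_omega: "omega ^ j = 1 \<longleftrightarrow> b dvd j"
  using order_zeta[of "b * j"] b_pos by (simp add: omega_def power_mult power2_eq_square)

lemma gamma_power_t: "gamma ^ t = omega"
proof -
  have "gamma ^ t = g ^ (t * e)"
    by (simp add: gamma_def mult.commute[of t] power_mult)
  also have "\<dots> = omega"
    by (simp add: t_mult_e omega_def zeta_def mult.commute[of b] power_mult)
  finally show ?thesis .
qed

lemma gamma_in_Ints: "gamma \<in> \<int>"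
proof -
  have "gamma ^ (p - 1) = 1"
    using order_g p_minus_1_mult_e
    by (simp add: gamma_def flip: power_mult) (simp add: mult.commute)
  then have "gamma ^ p = gamma"
    using prime_gt_0_nat[OF prime_p] by (metis Suc_diff_1 power_Suc2 mult_1)
  then show ?thesis
    using power_CHAR_eq_iff_Ints[of gamma] CHAR_eq prime_p by simp
qed

lemma Ints_eq_powers_gamma:
  assumes "c \<in> \<int>" "c \<noteq> 0"
  shows "\<exists>u. c = gamma ^ u"
proof -
  obtain i where i: "c = g ^ i"
    using generator assms(2) by blast
  have "c ^ p = c"
    using power_CHAR_eq_iff_Ints[of c] assms(1) CHAR_eq prime_p by simp
  then have "c ^ (p - 1) * c = 1 * c"
    using prime_gt_0_nat[OF prime_p] by (metis Suc_diff_1 power_Suc2 mult_1)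
  then have "c ^ (p - 1) = 1"
    using assms(2) by (simp only: mult_cancel_right) simp
  then have "(p - 1) * e dvd (p - 1) * i"
    using order_g p_minus_1_mult_e by (simp add: i flip: power_mult) (simp add: mult.commute)
  then have "e dvd i"
    using prime_gt_1_nat[OF prime_p] by simp
  then show ?thesis
    using i by (auto simp: gamma_def power_mult elim!: dvdE)
qed

lemma coprime_p_b: "coprime p b"
  using coprime_add_one_left[of "b * t"] by (simp add: p_eq)

lemma zeta_conjugates_distinct: "inj_on (\<lambda>j. zeta ^ (p ^ j)) {..<b}"
proof -
  have power_eq_iff: "zeta ^ u = zeta ^ v \<longleftrightarrow> [u = v] (mod b^2)" for u v
    using power_eq_power_iff_cong[of "b^2" zeta] order_zeta b_pos by simp
  have False if "i < j" "j < b" "[p ^ i = p ^ j] (mod b^2)" for i j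
  proof -
    have "coprime (p ^ i) (b^2)"
      using coprime_p_b by simp
    moreover have "[p ^ i * 1 = p ^ i * p ^ (j - i)] (mod b^2)"
      using that by (simp flip: power_add)
    ultimately have "[1 = p ^ (j - i)] (mod b^2)"
      by (simp only: cong_mult_lcancel_nat)
    then have "[p ^ (j - i) = 1] (mod b^2)"
      by (rule cong_sym)
    then have "b dvd (j - i) * t"
      using cong_power_eq_1_mod_square_iff[OF b_pos, of t "j - i"] p_eq by simp
    then have "b dvd j - i"
      using prime_b not_dvd prime_dvd_mult_iff by blast
    then show False
      using that nat_dvd_not_less[of "j - i" b] by simp
  qed
  then show ?thesis
    by (intro inj_onI) (metis power_eq_iff cong_sym lessThan_iff linorder_neqE_nat)
qed

lemma zeta_powers_independent:
  assumes "\<forall>i<b. a i \<in> \<int>" "(\<Sum>i<b. a i * zeta ^ i) = 0"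
  shows "\<forall>i<b. a i = 0"
  using Ints_independent_powers[of zeta b a] zeta_conjugates_distinct assms CHAR_eq prime_p by simp

lemma zeta_powers_span: "\<exists>a. (\<forall>i<b. a i \<in> \<int>) \<and> x = (\<Sum>i<b. a i * zeta ^ i)"
  using Ints_spanning_powers[of zeta b] zeta_conjugates_distinct card_UNIV CHAR_eq prime_p by simp

lemma kth_power_iff: "(\<exists>y. x = y ^ k) \<longleftrightarrow> (\<exists>c\<in>\<int>. \<exists>i<b. x = c ^ t * zeta ^ i)"
proof
  assume "\<exists>y. x = y ^ k"
  then obtain y where y: "x = y ^ k"
    by blast
  show "\<exists>c\<in>\<int>. \<exists>i<b. x = c ^ t * zeta ^ i"
  proof (cases "y = 0")
    case True
    then show ?thesis
      using y k_pos t_pos b_pos by (intro bexI[of _ 0] exI[of _ 0]) (simp_all add: power_0_left)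
  next
    case False
    then obtain m where "y = g ^ m"
      using generator by blast
    then have "x = zeta ^ (b * (m div b) + m mod b)"
      using y by (simp add: zeta_def mult.commute flip: power_mult)
    also have "\<dots> = omega ^ (m div b) * zeta ^ (m mod b)"
      by (simp only: power_add power_mult omega_def)
    also have "omega ^ (m div b) = (gamma ^ (m div b)) ^ t"
      by (metis gamma_power_t power_mult mult.commute)
    finally show ?thesis
      using gamma_in_Ints b_pos by (intro bexI[of _ "gamma ^ (m div b)"] exI[of _ "m mod b"]) auto
  qed
next
  assume "\<exists>c\<in>\<int>. \<exists>i<b. x = c ^ t * zeta ^ i"
  then obtain c i where c: "c \<in> \<int>" and x: "x = c ^ t * zeta ^ i"
    by blast
  show "\<exists>y. x = y ^ k"
  proof (cases "c = 0")
    case True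
    then show ?thesis
      using x t_pos k_pos by (intro exI[of _ 0]) (simp add: power_0_left)
  next
    case False
    then obtain u where "c = gamma ^ u"
      using Ints_eq_powers_gamma c by blast
    then have "c ^ t = zeta ^ (b * u)"
      by (metis gamma_power_t omega_def power_mult mult.commute)
    then have "x = (g ^ k) ^ (b * u + i)"
      using x by (simp add: power_add zeta_def)
    then have "x = (g ^ (b * u + i)) ^ k"
      by (metis power_mult mult.commute)
    then show ?thesis
      by blast
  qed
qed

lemma waring_rep_mult_b:
  assumes "waring_rep_on t s (\<int> :: 'a set)"
  shows "waring_rep k (b * s) TYPE('a)"
  unfolding waring_rep_def
proof
  fix x :: 'a
  obtain a where a: "\<forall>i<b. a i \<in> \<int>" "x = (\<Sum>i<b. a i * zeta ^ i)"
    using zeta_powers_span by blast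
  have "\<forall>i. \<exists>F. i < b \<longrightarrow> range F \<subseteq> \<int> \<and> a i = (\<Sum>j<s. F j ^ t)"
    using assms a(1) unfolding waring_rep_on_def by blast
  then obtain F where F: "\<And>i. i < b \<Longrightarrow> range (F i) \<subseteq> \<int> \<and> a i = (\<Sum>j<s. F i j ^ t)"
    by metis
  have "\<forall>i j. \<exists>y. i < b \<longrightarrow> F i j ^ t * zeta ^ i = y ^ k"
    using F kth_power_iff by blast
  then obtain H where H: "\<And>i j. i < b \<Longrightarrow> F i j ^ t * zeta ^ i = H i j ^ k"
    by metis
  have "x = (\<Sum>i<b. \<Sum>j<s. F i j ^ t * zeta ^ i)"
    using a F by (simp add: sum_distrib_right)
  also have "\<dots> = (\<Sum>i<b. \<Sum>j<s. H i j ^ k)"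
    using H by simp
  also have "\<dots> = (\<Sum>ij\<in>{..<b} \<times> {..<s}. H (fst ij) (snd ij) ^ k)"
    by (simp add: sum.cartesian_product split_def)
  finally obtain f where "x = (\<Sum>l<b * s. f l ^ k)"
    using sum_powers_reindex_lessThan
        [of "{..<b} \<times> {..<s}" "b * s" UNIV "\<lambda>ij. H (fst ij) (snd ij)" k]
      k_pos by auto
  then show "\<exists>f. x = (\<Sum>l<b * s. f l ^ k)"
    by blast
qed

lemma waring_rep_div_b:
  assumes "waring_rep k s TYPE('a)"
  shows "waring_rep_on t (s div b) (\<int> :: 'a set)"
  unfolding waring_rep_on_def
proof
  fix a :: 'a
  assume a: "a \<in> \<int>"
  obtain f where f: "(\<Sum>i<b. a * zeta ^ i) = (\<Sum>j<s. f j ^ k)"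
    using assms unfolding waring_rep_def by blast
  have "\<forall>j. \<exists>c i. c \<in> \<int> \<and> i < b \<and> f j ^ k = c ^ t * zeta ^ i"
    using kth_power_iff by blast
  then obtain C I where C: "\<And>j. C j \<in> \<int>" and I: "\<And>j. I j < b"
    and CI: "\<And>j. f j ^ k = C j ^ t * zeta ^ I j"
    by metis
  define fiber where "fiber i = {j\<in>{..<s}. I j = i}" for i
  define A where "A i = (\<Sum>j\<in>fiber i. C j ^ t)" for i
  have "(\<Sum>j<s. f j ^ k) = (\<Sum>i<b. \<Sum>j\<in>fiber i. C j ^ t * zeta ^ I j)"
    unfolding fiber_def CI using I by (intro sum.group[symmetric]) auto
  also have "\<dots> = (\<Sum>i<b. A i * zeta ^ i)"
    unfolding A_def sum_distrib_right by (intro sum.cong refl) (simp add: fiber_def)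
  finally have "(\<Sum>i<b. (a - A i) * zeta ^ i) = 0"
    using f by (simp add: left_diff_distrib sum_subtractf)
  moreover have "\<forall>i<b. a - A i \<in> \<int>"
    using a C by (auto simp: A_def intro!: Ints_diff Ints_sum Ints_power)
  ultimately have "\<forall>i<b. a - A i = 0"
    by (intro zeta_powers_independent)
  then have A: "\<forall>i<b. a = A i"
    by simp
  obtain i where i: "i < b" "card (fiber i) \<le> s div b"
    using ex_card_fiber_le_div[of b s I] b_pos I unfolding fiber_def by blast
  moreover obtain h where "range h \<subseteq> \<int>" "A i = (\<Sum>l<s div b. h l ^ t)"
    unfolding A_def
  proof (rule sum_powers_reindex_lessThan)
    show "finite (fiber i)"
      by (simp add: fiber_def)
    show "C ` fiber i \<subseteq> \<int>"
      using C by blast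
  qed (use i(2) t_pos in auto)
  ultimately show "\<exists>h. range h \<subseteq> \<int> \<and> a = (\<Sum>l<s div b. h l ^ t)"
    using A by auto
qed

lemma waring_rep_on_Ints_p: "waring_rep_on t p (\<int> :: 'a set)"
  using waring_rep_on_Ints_CHAR[where 'a='a, of t] CHAR_eq prime_gt_0_nat[OF prime_p] t_pos
  by simp

lemma waring_number_eq_mult_Least:
  "\<exists>s. waring_rep k s TYPE('a)"
  "waring_number k TYPE('a) = b * (LEAST s. waring_rep_on t s (\<int> :: 'a set))"
  using waring_rep_on_Ints_p waring_rep_mult_b waring_rep_div_b Least_eq_mult_Least
  by (auto simp: waring_number_def)

lemma card_Ints: "card (\<int> :: 'a set) = p"
  using card_Ints_eq_CHAR[where 'a='a] CHAR_eq prime_gt_0_nat[OF prime_p] by simp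

lemma omega_powers_distinct: "inj_on (\<lambda>j. omega ^ j) {..<b}"
  using power_eq_power_iff_cong[of b omega] order_omega b_pos
  by (auto intro!: inj_onI dest: cong_less_modulus_unique_nat)

lemma Ints_powers_eq: "(\<lambda>c. c ^ t) ` (\<int> :: 'a set) = insert 0 ((\<lambda>j. omega ^ j) ` {..<b})"
proof (intro equalityI subsetI)
  fix x :: 'a
  assume "x \<in> (\<lambda>c. c ^ t) ` \<int>"
  then obtain c where c: "c \<in> \<int>" "x = c ^ t"
    by blast
  show "x \<in> insert 0 ((\<lambda>j. omega ^ j) ` {..<b})"
  proof (cases "c = 0")
    case True
    then show ?thesis
      using c t_pos by simp
  next
    case False
    then obtain u where "c = gamma ^ u"
      using Ints_eq_powers_gamma c(1) by blast
    then have "x = omega ^ u"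
      using c(2) by (metis gamma_power_t power_mult mult.commute)
    also have "\<dots> = omega ^ (u mod b)"
      using power_eq_power_iff_cong[of b omega] order_omega b_pos by (simp add: cong_def)
    finally show ?thesis
      using b_pos by simp
  qed
next
  fix x :: 'a
  assume "x \<in> insert 0 ((\<lambda>j. omega ^ j) ` {..<b})"
  then consider "x = 0" | j where "x = omega ^ j"
    by blast
  then show "x \<in> (\<lambda>c. c ^ t) ` \<int>"
  proof cases
    case 1
    then show ?thesis
      using t_pos by (intro image_eqI[of _ _ 0]) simp_all
  next
    case 2
    then have "x = (gamma ^ j) ^ t"
      by (metis gamma_power_t power_mult mult.commute)
    then show ?thesis
      using gamma_in_Ints by (intro image_eqI[of _ _ "gamma ^ j"]) simp_all
  qed
qed

lemma card_Ints_powers: "card ((\<lambda>c. c ^ t) ` (\<int> :: 'a set)) = b + 1"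
proof -
  have "omega ^ j \<noteq> 0" for j
    using order_omega[of b] b_pos by (cases "omega = 0") (simp_all add: power_0_left)
  then show ?thesis
    using omega_powers_distinct by (simp add: Ints_powers_eq card_image image_iff)
qed

lemma Least_waring_rep_on_squares:
  assumes "t = 2"
  shows "(LEAST s. waring_rep_on t s (\<int> :: 'a set)) = 2"
proof (rule Least_equality)
  have fin: "finite (\<int> :: 'a set)"
    by (rule finite_subset[OF subset_UNIV]) simp
  have powers_Ints: "(\<lambda>c. c ^ t) ` \<int> \<subseteq> (\<int> :: 'a set)"
    by auto
  show "waring_rep_on t 2 (\<int> :: 'a set)"
    unfolding waring_rep_on_def
  proof
    fix a :: 'a
    assume "a \<in> \<int>"
    then have "(\<lambda>x. a - x) ` (\<lambda>c. c ^ t) ` \<int> \<subseteq> (\<int> :: 'a set)"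
      by auto
    moreover have "card (\<int> :: 'a set) < 2 * card ((\<lambda>c. c ^ t) ` (\<int> :: 'a set))"
      using card_Ints card_Ints_powers p_eq assms by simp
    ultimately obtain x y where "x \<in> (\<lambda>c. c ^ t) ` \<int>" "y \<in> (\<lambda>c. c ^ t) ` \<int>" "a = x + y"
      using ex_sum_eq_if_card_lt[OF fin powers_Ints] by blast
    then obtain c d where "c \<in> \<int>" "d \<in> \<int>" "a = c ^ t + d ^ t"
      by blast
    then show "\<exists>f. range f \<subseteq> \<int> \<and> a = (\<Sum>i<(2::nat). f i ^ t)"
      by (intro exI[of _ "\<lambda>i. if i = 0 then c else d"]) (auto simp: numeral_2_eq_2)
  qed
  fix s
  assume rep: "waring_rep_on t s (\<int> :: 'a set)"
  show "2 \<le> s"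
  proof (rule ccontr)
    assume "\<not> 2 \<le> s"
    then consider "s = 0" | "s = 1"
      by linarith
    then show False
    proof cases
      case 1
      then show False
        using rep Ints_1 unfolding waring_rep_on_def by fastforce
    next
      case 2
      then have "(\<int> :: 'a set) \<subseteq> (\<lambda>c. c ^ t) ` \<int>"
        using rep unfolding waring_rep_on_def by fastforce
      then have "card (\<int> :: 'a set) \<le> b + 1"
        using card_mono[OF finite_imageI[OF fin]] card_Ints_powers by metis
      then show False
        using card_Ints p_eq assms b_pos by simp
    qed
  qed
qed

end

theorem mainTheorem9:
  fixes b p t :: nat
  shows "(prime b \<and> prime p \<and> t > 0 \<and> p = b * t + 1 \<and> \<not> b dvd t
            \<and> card (UNIV :: 'a set) = p ^ b \<and> card (UNIV :: 'c set) = p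
          \<longrightarrow> (\<exists>s. waring_rep ((p ^ b - 1) div b\<^sup>2) s TYPE('a::{field,finite}))
              \<and> (\<exists>s. waring_rep t s TYPE('c::{field,finite}))
              \<and> waring_number ((p ^ b - 1) div b\<^sup>2) TYPE('a) = b * waring_number t TYPE('c))
       \<and> (prime b \<and> odd b \<and> p = 2 * b + 1 \<and> prime p \<and> card (UNIV :: 'a set) = p ^ b
          \<longrightarrow> (\<exists>s. waring_rep ((p ^ b - 1) div b\<^sup>2) s TYPE('a))
              \<and> waring_number ((p ^ b - 1) div b\<^sup>2) TYPE('a) = 2 * b)"
proof -
  obtain g :: 'a where gen: "\<And>x. x \<noteq> 0 \<Longrightarrow> \<exists>i. x = g ^ i"
    and order: "\<And>i. g ^ i = 1 \<longleftrightarrow> (card (UNIV :: 'a set) - 1) dvd i"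
    using finite_field_primitive_element by blast
  show ?thesis
  proof (intro conjI impI)
    assume hyps: "prime b \<and> prime p \<and> t > 0 \<and> p = b * t + 1 \<and> \<not> b dvd t
      \<and> card (UNIV :: 'a set) = p ^ b \<and> card (UNIV :: 'c set) = p"
    interpret waring_extension b p t g
      using hyps gen order by unfold_locales auto
    have rep_c: "waring_rep t s TYPE('c) \<longleftrightarrow> waring_rep_on t s (\<int> :: 'a set)" for s
      using waring_rep_prime_field_iff_Ints hyps CHAR_eq by blast
    show "\<exists>s. waring_rep ((p ^ b - 1) div b\<^sup>2) s TYPE('a)"
      using waring_number_eq_mult_Least(1) by (simp add: k_def)
    show "\<exists>s. waring_rep t s TYPE('c)"
      using rep_c waring_rep_on_Ints_p by blast
    show "waring_number ((p ^ b - 1) div b\<^sup>2) TYPE('a) = b * waring_number t TYPE('c)"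
      using waring_number_eq_mult_Least(2) rep_c by (simp add: k_def waring_number_def)
  next
    assume hyps: "prime b \<and> odd b \<and> p = 2 * b + 1 \<and> prime p \<and> card (UNIV :: 'a set) = p ^ b"
    then have "\<not> b dvd 2"
      using prime_ge_2_nat[of b] dvd_imp_le[of b 2] by auto
    then interpret waring_extension b p 2 g
      using hyps gen order by unfold_locales auto
    show "\<exists>s. waring_rep ((p ^ b - 1) div b\<^sup>2) s TYPE('a)"
      and "waring_number ((p ^ b - 1) div b\<^sup>2) TYPE('a) = 2 * b"
      using waring_number_eq_mult_Least Least_waring_rep_on_squares by (simp_all add: k_def)
  qed
qed

end
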